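(* Let $M^5\subset\mathbb{C}^3$ be a hypersurface of class $\mathcal{C}^\kappa$ ($\kappa\ge3$), $\mathcal{C}^\infty$ or $\mathcal{C}^\omega$, given in holomorphic coordinates $(z_1,z_2,w)$, $z_k=x_k+\sqrt{-1}y_k$, $w=u+\sqrt{-1}v$, by $v=\varphi(x_1,x_2,y_1,y_2,u)$ with $\varphi$ real-valued. Set $$A_i:=-\frac{\varphi_{z_i}}{\sqrt{-1}+\varphi_u},\qquad \mathcal{L}_i:=\frac{\partial}{\partial z_i}+A_i\frac{\partial}{\partial u},\qquad \overline{\mathcal{L}}_i:=\frac{\partial}{\partial\bar z_i}+\overline{A_i}\frac{\partial}{\partial u}\qquad(i=1,2),$$ and assume that $\mathcal{L}_1(\overline{A_1})$, $\overline{\mathcal{L}}_1(A_1)$ and $\mathcal{L}_1(\overline{A_1})-\overline{\mathcal{L}}_1(A_1)$ are nowhere zero on the domain considered. Then $$-\frac{\mathcal{L}_2(\overline{A_1})-\overline{\mathcal{L}}_1(A_2)}{\mathcal{L}_1(\overline{A_1})-\overline{\mathcal{L}}_1(A_1)}=-\frac{\mathcal{L}_2(\overline{A_1})}{\mathcal{L}_1(\overline{A_1})}=-\frac{\overline{\mathcal{L}}_1(A_2)}{\overline{\mathcal{L}}_1(A_1)}.$$ (When the Levi form of $M$ has rank $1$ everywhere, this common value $k$ is the function for which $\mathcal{K}=k\mathcal{L}_1+\mathcal{L}_2$ generates the Levi kernel.)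
   Context: Notation: $\varphi_{z_i}=\tfrac12(\partial_{x_i}-\sqrt{-1}\partial_{y_i})\varphi$, $\varphi_{\bar z_i}=\overline{\varphi_{z_i}}$, $\varphi_u=\partial\varphi/\partial u$. The fields $\mathcal{L}_1,\mathcal{L}_2$ are written intrinsically on $M$ in the coordinates $(x_1,x_2,y_1,y_2,u)$ and form a frame of $T^{1,0}M$. *)

theory Defs
  imports "HOL-Analysis.Analysis" "HOL-Library.Numeral_Type"
begin

text \<open>Points of M are parametrised by (x1,x2,y1,y2,u) in real^5, with coordinate
  indices 0 = x1, 1 = x2, 2 = y1, 3 = y2, 4 = u.\<close>

definition partial :: "5 \<Rightarrow> (real^5 \<Rightarrow> 'a::real_normed_vector) \<Rightarrow> real^5 \<Rightarrow> 'a" where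
  "partial k f p = vector_derivative (\<lambda>t. f (p + t *\<^sub>R axis k 1)) (at 0)"

fun Ck :: "nat \<Rightarrow> (real^5 \<Rightarrow> 'a::real_normed_vector) \<Rightarrow> (real^5) set \<Rightarrow> bool" where
  "Ck 0 f U = continuous_on U f"
| "Ck (Suc k) f U = ((\<forall>p\<in>U. f differentiable (at p)) \<and> (\<forall>i. Ck k (partial i f) U))"

definition xidx :: "nat \<Rightarrow> 5" where "xidx i = (if i = 1 then 0 else 1)"
definition yidx :: "nat \<Rightarrow> 5" where "yidx i = (if i = 1 then 2 else 3)"
definition uidx :: 5 where "uidx = 4"

definition dz :: "nat \<Rightarrow> (real^5 \<Rightarrow> complex) \<Rightarrow> real^5 \<Rightarrow> complex" where
  "dz i f p = (1/2) * (partial (xidx i) f p - \<i> * partial (yidx i) f p)"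
definition dzb :: "nat \<Rightarrow> (real^5 \<Rightarrow> complex) \<Rightarrow> real^5 \<Rightarrow> complex" where
  "dzb i f p = (1/2) * (partial (xidx i) f p + \<i> * partial (yidx i) f p)"
definition du :: "(real^5 \<Rightarrow> complex) \<Rightarrow> real^5 \<Rightarrow> complex" where
  "du f p = partial uidx f p"

definition Phi :: "(real^5 \<Rightarrow> real) \<Rightarrow> real^5 \<Rightarrow> complex" where
  "Phi \<phi> p = complex_of_real (\<phi> p)"

definition Acoef :: "(real^5 \<Rightarrow> real) \<Rightarrow> nat \<Rightarrow> real^5 \<Rightarrow> complex" where
  "Acoef \<phi> i p = - dz i (Phi \<phi>) p / (\<i> + du (Phi \<phi>) p)"
definition Abar :: "(real^5 \<Rightarrow> real) \<Rightarrow> nat \<Rightarrow> real^5 \<Rightarrow> complex" where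
  "Abar \<phi> i p = cnj (Acoef \<phi> i p)"

definition Lop :: "(real^5 \<Rightarrow> real) \<Rightarrow> nat \<Rightarrow> (real^5 \<Rightarrow> complex) \<Rightarrow> real^5 \<Rightarrow> complex" where
  "Lop \<phi> i g p = dz i g p + Acoef \<phi> i p * du g p"
definition Lbar :: "(real^5 \<Rightarrow> real) \<Rightarrow> nat \<Rightarrow> (real^5 \<Rightarrow> complex) \<Rightarrow> real^5 \<Rightarrow> complex" where
  "Lbar \<phi> i g p = dzb i g p + Abar \<phi> i p * du g p"

end

theory Submission imports Defs begin

(* The hypersurface M is the graph v = \<phi>(x1,x2,y1,y2,u), and A_i = -\<phi>_{z_i}/(\<i> + \<phi>_u).
   The heart of the proof is the symmetry identity, valid for all i, j at every point,

      L_i(conj A_j) = D / conj D * Lbar_j(A_i),      D = \<i> + \<phi>_u   (never zero),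

   which is the Hermitian symmetry of the Levi form written in the frame L_1, L_2.
   Given it, the three quotients of the theorem are quotients of proportional pairs
   a = r b, c = r d, and coincide by elementary algebra.

   The identity is proved in real coordinates.  Then A_i and conj A_j
   are written as quotients of first partials of \<phi>, differentiated by the quotient rule, and
   both sides of the identity are reduced to one expression in the complex first and second
   derivatives of \<phi>, using Schwarz's theorem to identify the mixed partials. *)

lemma partial_from_derivative:
  assumes "(g has_derivative g') (at p)"
  shows "partial k g p = g' (axis k 1)"
proof -
  let ?v = "axis k (1::real) :: real^5"
  have line: "((\<lambda>t. p + t *\<^sub>R ?v) has_derivative (\<lambda>t. t *\<^sub>R ?v)) (at 0)"
    by (auto intro!: derivative_eq_intros)
  have "((\<lambda>t. g (p + t *\<^sub>R ?v)) has_derivative (\<lambda>t. g' (t *\<^sub>R ?v))) (at 0)"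
    using has_derivative_compose[OF line] assms by simp
  moreover have "(\<lambda>t. g' (t *\<^sub>R ?v)) = (\<lambda>t. t *\<^sub>R g' ?v)"
    using linear_scale[OF has_derivative_linear[OF assms]] by auto
  ultimately have "((\<lambda>t. g (p + t *\<^sub>R ?v)) has_vector_derivative g' ?v) (at 0)"
    unfolding has_vector_derivative_def by simp
  then show ?thesis unfolding partial_def by (rule vector_derivative_at)
qed

lemma partial_along_line:
  fixes g :: "real^5 \<Rightarrow> real"
  assumes "g differentiable (at (x + s *\<^sub>R axis k 1))"
  shows "((\<lambda>t. g (x + t *\<^sub>R axis k 1)) has_real_derivative partial k g (x + s *\<^sub>R axis k 1)) (at s)"
proof -
  let ?v = "axis k (1::real) :: real^5"
  obtain g' where g': "(g has_derivative g') (at (x + s *\<^sub>R ?v))"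
    using assms unfolding differentiable_def by blast
  have line: "((\<lambda>t. x + t *\<^sub>R ?v) has_derivative (\<lambda>t. t *\<^sub>R ?v)) (at s)"
    by (auto intro!: derivative_eq_intros)
  have "((\<lambda>t. g (x + t *\<^sub>R ?v)) has_derivative (\<lambda>t. g' (t *\<^sub>R ?v))) (at s)"
    by (rule has_derivative_compose[OF line g'])
  moreover have "(\<lambda>t. g' (t *\<^sub>R ?v)) = (\<lambda>t. g' ?v * t)"
    using linear_scale[OF has_derivative_linear[OF g']] by (auto simp: mult.commute)
  ultimately show ?thesis
    unfolding has_field_derivative_def partial_from_derivative[OF g'] by simp
qed

lemma partial_Phi:
  assumes "\<phi> differentiable (at q)"
  shows "partial k (Phi \<phi>) q = complex_of_real (partial k \<phi> q)"
proof -
  obtain d where d: "(\<phi> has_derivative d) (at q)" using assms unfolding differentiable_def by blast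
  have "(Phi \<phi> has_derivative (\<lambda>v. complex_of_real (d v))) (at q)"
    using has_derivative_of_real[OF d] by (simp add: Phi_def[abs_def])
  then show ?thesis using partial_from_derivative[OF d] partial_from_derivative by metis
qed

lemma partial_of_real_quotient:
  fixes A B C :: "real^5 \<Rightarrow> real" and c d :: complex
  assumes "open S" "p \<in> S"
    and g_eq: "\<And>q. q \<in> S \<Longrightarrow> g q = - ((1/2) * (of_real (A q) + c * of_real (B q))) / (d + of_real (C q))"
    and dA: "A differentiable (at p)" and dB: "B differentiable (at p)" and dC: "C differentiable (at p)"
    and nz: "d + of_real (C p) \<noteq> 0"
  shows "partial k g p = - ((1/2) * (of_real (partial k A p) + c * of_real (partial k B p))) / (d + of_real (C p))
     + (1/2) * (of_real (A p) + c * of_real (B p)) * of_real (partial k C p) / (d + of_real (C p))^2"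
proof -
  obtain A' where A': "(A has_derivative A') (at p)" using dA unfolding differentiable_def by blast
  obtain B' where B': "(B has_derivative B') (at p)" using dB unfolding differentiable_def by blast
  obtain C' where C': "(C has_derivative C') (at p)" using dC unfolding differentiable_def by blast
  let ?N = "\<lambda>q. - ((1/2) * (of_real (A q) + c * of_real (B q)))"
  let ?N' = "\<lambda>v. - ((1/2) * (of_real (A' v) + c * of_real (B' v)))"
  let ?D = "\<lambda>q. d + complex_of_real (C q)"
  have N: "(?N has_derivative ?N') (at p)"
    by (intro derivative_eq_intros) (auto intro: A' B')
  have D: "(?D has_derivative (\<lambda>v. of_real (C' v))) (at p)"
    by (intro derivative_eq_intros) (auto intro: C')
  have g': "(g has_derivative (\<lambda>v. (?N' v * ?D p - ?N p * of_real (C' v)) / (?D p * ?D p))) (at p)"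
    by (rule has_derivative_transform_within_open[OF has_derivative_divide'[OF N D nz] assms(1,2)])
       (simp add: g_eq)
  have quotient: "(n' * e - n * c') / (e * e) = n' / e - n * c' / e^2" if "e \<noteq> 0" for n n' e c' :: complex
    using that by (simp add: field_simps power2_eq_square)
  show ?thesis
    unfolding partial_from_derivative[OF A'] partial_from_derivative[OF B']
      partial_from_derivative[OF C'] partial_from_derivative[OF g'] quotient[OF nz]
    by simp
qed

section \<open>Schwarz's theorem\<close>

lemma second_difference_mean_value:
  fixes f :: "real^5 \<Rightarrow> real"
  assumes "ball p r \<subseteq> U" "0 < h" "2*h < r"
    and df: "\<forall>q\<in>U. f differentiable (at q)"
    and dfa: "\<forall>q\<in>U. partial a f differentiable (at q)"
  shows "\<exists>q. dist q p < r \<and>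
     f (p + h *\<^sub>R axis a 1 + h *\<^sub>R axis b 1) - f (p + h *\<^sub>R axis a 1)
       - f (p + h *\<^sub>R axis b 1) + f p = h^2 * partial b (partial a f) q"
proof -
  let ?ea = "axis a (1::real) :: real^5"
  let ?eb = "axis b (1::real) :: real^5"
  have in_square: "p + s *\<^sub>R ?ea + t *\<^sub>R ?eb \<in> U \<and> dist (p + s *\<^sub>R ?ea + t *\<^sub>R ?eb) p < r"
    if "0 \<le> s" "s \<le> h" "0 \<le> t" "t \<le> h" for s t
  proof -
    have "norm (s *\<^sub>R ?ea + t *\<^sub>R ?eb) \<le> norm (s *\<^sub>R ?ea) + norm (t *\<^sub>R ?eb)"
      by (rule norm_triangle_ineq)
    also have "\<dots> = s + t" using that by simp
    finally have "dist (p + s *\<^sub>R ?ea + t *\<^sub>R ?eb) p < r"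
      using that assms by (simp add: dist_norm add.assoc)
    then show ?thesis using assms(1) by (auto simp: dist_commute)
  qed
  define \<psi> where "\<psi> s = f (p + h *\<^sub>R ?eb + s *\<^sub>R ?ea) - f (p + s *\<^sub>R ?ea)" for s
  have "\<exists>z. 0 < z \<and> z < h \<and> \<psi> h - \<psi> 0 = (h - 0) *
      (partial a f (p + h *\<^sub>R ?eb + z *\<^sub>R ?ea) - partial a f (p + z *\<^sub>R ?ea))"
  proof (rule MVT2)
    fix s assume s: "0 \<le> s" "s \<le> h"
    have "p + h *\<^sub>R ?eb + s *\<^sub>R ?ea \<in> U" "p + s *\<^sub>R ?ea \<in> U"
      using in_square[of s h] in_square[of s 0] s assms by (simp_all add: algebra_simps)
    then show "(\<psi> has_real_derivative
      (partial a f (p + h *\<^sub>R ?eb + s *\<^sub>R ?ea) - partial a f (p + s *\<^sub>R ?ea))) (at s)"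
      unfolding \<psi>_def by (intro DERIV_diff partial_along_line) (use df in auto)
  qed (use assms in auto)
  then obtain s1 where s1: "0 < s1" "s1 < h" "\<psi> h - \<psi> 0 = h *
      (partial a f (p + h *\<^sub>R ?eb + s1 *\<^sub>R ?ea) - partial a f (p + s1 *\<^sub>R ?ea))" by auto
  have "\<exists>z. 0 < z \<and> z < h \<and> partial a f (p + s1 *\<^sub>R ?ea + h *\<^sub>R ?eb)
      - partial a f (p + s1 *\<^sub>R ?ea + 0 *\<^sub>R ?eb) = (h - 0) *
      partial b (partial a f) (p + s1 *\<^sub>R ?ea + z *\<^sub>R ?eb)"
  proof (rule MVT2)
    fix t assume "0 \<le> t" "t \<le> h"
    then have "p + s1 *\<^sub>R ?ea + t *\<^sub>R ?eb \<in> U" using in_square[of s1 t] s1 by simp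
    then show "((\<lambda>t. partial a f (p + s1 *\<^sub>R ?ea + t *\<^sub>R ?eb)) has_real_derivative
      partial b (partial a f) (p + s1 *\<^sub>R ?ea + t *\<^sub>R ?eb)) (at t)"
      by (intro partial_along_line) (use dfa in auto)
  qed (use assms in auto)
  then obtain t1 where t1: "0 < t1" "t1 < h" "partial a f (p + s1 *\<^sub>R ?ea + h *\<^sub>R ?eb)
      - partial a f (p + s1 *\<^sub>R ?ea) = h *
      partial b (partial a f) (p + s1 *\<^sub>R ?ea + t1 *\<^sub>R ?eb)" by auto
  show ?thesis
  proof (intro exI conjI)
    show "dist (p + s1 *\<^sub>R ?ea + t1 *\<^sub>R ?eb) p < r" using in_square[of s1 t1] s1 t1 by simp
    have corner: "p + h *\<^sub>R ?eb + s1 *\<^sub>R ?ea = p + s1 *\<^sub>R ?ea + h *\<^sub>R ?eb"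
      by (simp add: algebra_simps)
    have "f (p + h *\<^sub>R ?ea + h *\<^sub>R ?eb) - f (p + h *\<^sub>R ?ea) - f (p + h *\<^sub>R ?eb) + f p
        = \<psi> h - \<psi> 0" unfolding \<psi>_def by (simp add: algebra_simps)
    also have "\<dots> = h * (h * partial b (partial a f) (p + s1 *\<^sub>R ?ea + t1 *\<^sub>R ?eb))"
      using s1(3) t1(3) corner by simp
    finally show "f (p + h *\<^sub>R ?ea + h *\<^sub>R ?eb) - f (p + h *\<^sub>R ?ea) - f (p + h *\<^sub>R ?eb) + f p
        = h^2 * partial b (partial a f) (p + s1 *\<^sub>R ?ea + t1 *\<^sub>R ?eb)"
      by (simp add: power2_eq_square)
  qed
qed

text \<open>Schwarz's theorem: the second difference is symmetric in a and b, so both mixed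
  partials are limits of the same quantities and agree where they are continuous.\<close>

lemma mixed_partials_commute:
  fixes f :: "real^5 \<Rightarrow> real"
  assumes "open U" "p \<in> U"
    and df: "\<forall>q\<in>U. f differentiable (at q)"
    and dfa: "\<forall>q\<in>U. partial a f differentiable (at q)"
    and dfb: "\<forall>q\<in>U. partial b f differentiable (at q)"
    and ca: "continuous (at p) (partial b (partial a f))"
    and cb: "continuous (at p) (partial a (partial b f))"
  shows "partial b (partial a f) p = partial a (partial b f) p"
proof (rule ccontr)
  let ?L1 = "partial b (partial a f) p" and ?L2 = "partial a (partial b f) p"
  assume ne: "?L1 \<noteq> ?L2"
  define e where "e = \<bar>?L1 - ?L2\<bar> / 2"
  have e: "e > 0" using ne by (simp add: e_def)
  obtain d1 where d1: "d1 > 0" "\<forall>q. dist q p < d1 \<longrightarrow> dist (partial b (partial a f) q) ?L1 < e"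
    using ca e unfolding continuous_at_eps_delta by blast
  obtain d2 where d2: "d2 > 0" "\<forall>q. dist q p < d2 \<longrightarrow> dist (partial a (partial b f) q) ?L2 < e"
    using cb e unfolding continuous_at_eps_delta by blast
  obtain r0 where r0: "r0 > 0" "ball p r0 \<subseteq> U" using assms(1,2) open_contains_ball by blast
  define r where "r = min r0 (min d1 d2)"
  have r: "r > 0" "ball p r \<subseteq> U" using r0 d1 d2 by (auto simp: r_def)
  define h where "h = r / 3"
  have h: "0 < h" "2*h < r" using r by (auto simp: h_def)
  obtain q1 where q1: "dist q1 p < r" "f (p + h *\<^sub>R axis a 1 + h *\<^sub>R axis b 1) - f (p + h *\<^sub>R axis a 1)
       - f (p + h *\<^sub>R axis b 1) + f p = h^2 * partial b (partial a f) q1"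
    using second_difference_mean_value[OF r(2) h df dfa] by blast
  obtain q2 where q2: "dist q2 p < r" "f (p + h *\<^sub>R axis b 1 + h *\<^sub>R axis a 1) - f (p + h *\<^sub>R axis b 1)
       - f (p + h *\<^sub>R axis a 1) + f p = h^2 * partial a (partial b f) q2"
    using second_difference_mean_value[OF r(2) h df dfb] by blast
  have "h^2 * partial b (partial a f) q1 = h^2 * partial a (partial b f) q2"
    using q1(2) q2(2) by (simp add: algebra_simps)
  then have same: "partial b (partial a f) q1 = partial a (partial b f) q2" using h by simp
  have "dist q1 p < d1" "dist q2 p < d2" using q1 q2 by (auto simp: r_def)
  then have "dist (partial b (partial a f) q1) ?L1 < e" "dist (partial a (partial b f) q2) ?L2 < e"
    using d1 d2 by auto
  then have "\<bar>?L1 - ?L2\<bar> < 2 * e" using same by (simp add: dist_real_def)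
  then show False by (simp add: e_def)
qed

lemma Ck_Suc_imp_Ck: "Ck (Suc k) f U \<Longrightarrow> Ck k f U"
proof (induction k arbitrary: f)
  case 0
  then show ?case
    by (auto intro!: continuous_at_imp_continuous_on differentiable_imp_continuous_within)
next
  case (Suc k)
  then show ?case by auto
qed

lemma Ck_le: "Ck n f U \<Longrightarrow> m \<le> n \<Longrightarrow> Ck m f U"
proof (induction n)
  case 0
  then show ?case by simp
next
  case (Suc n)
  then show ?case using Ck_Suc_imp_Ck by (cases "m = Suc n") auto
qed

lemma C2_facts:
  fixes f :: "real^5 \<Rightarrow> real"
  assumes "open U" "Ck 2 f U"
  shows C2_differentiable: "\<forall>q\<in>U. f differentiable (at q)"
    and C2_partial_differentiable: "\<forall>q\<in>U. partial a f differentiable (at q)"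
    and C2_mixed_partials: "p \<in> U \<Longrightarrow> partial b (partial a f) p = partial a (partial b f) p"
proof -
  have C2: "Ck (Suc (Suc 0)) f U" using assms(2) by (simp add: numeral_eq_Suc del: Ck.simps)
  then have df: "\<forall>q\<in>U. f differentiable (at q)"
    and dfa: "\<And>a. \<forall>q\<in>U. partial a f differentiable (at q)" by auto
  then show "\<forall>q\<in>U. f differentiable (at q)" "\<forall>q\<in>U. partial a f differentiable (at q)"
    by blast+
  have cont: "continuous (at q) (partial b (partial a f))" if "q \<in> U" for a b q
  proof -
    have "continuous_on U (partial b (partial a f))" using C2 by simp
    then show ?thesis using that continuous_on_eq_continuous_at[OF assms(1)] by blast
  qed
  show "p \<in> U \<Longrightarrow> partial b (partial a f) p = partial a (partial b f) p"
    by (rule mixed_partials_commute[OF assms(1) _ df dfa dfa cont cont])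
qed

section \<open>Hermitian symmetry of the Levi form\<close>

lemma Acoef_real_form:
  assumes "\<phi> differentiable (at q)"
  shows "Acoef \<phi> i q = - ((1/2) * (of_real (partial (xidx i) \<phi> q) + - \<i> * of_real (partial (yidx i) \<phi> q)))
      / (\<i> + of_real (partial uidx \<phi> q))"
  using assms by (simp add: Acoef_def dz_def du_def partial_Phi)

lemma Abar_real_form:
  assumes "\<phi> differentiable (at q)"
  shows "Abar \<phi> j q = - ((1/2) * (of_real (partial (xidx j) \<phi> q) + \<i> * of_real (partial (yidx j) \<phi> q)))
      / (- \<i> + of_real (partial uidx \<phi> q))"
  using assms by (simp add: Abar_def Acoef_def dz_def du_def partial_Phi)

text \<open>Multiplying out, \<open>conj D * L_i(conj A_j)\<close> and \<open>D * Lbar_j(A_i)\<close> both equal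
  \<open>-\<phi>_{z_i zbar_j} + \<phi>_{zbar_j} \<phi>_{z_i u}/conj D + \<phi>_{z_i} \<phi>_{zbar_j u}/D
   - \<phi>_{z_i} \<phi>_{zbar_j} \<phi>_{uu}/(D conj D)\<close>, once the mixed partials are identified.\<close>

lemma Lop_Abar_eq_Lbar_Acoef:
  fixes \<phi> :: "real^5 \<Rightarrow> real"
  assumes U: "open U" "p \<in> U" and C2: "Ck 2 \<phi> U"
  shows "Lop \<phi> i (Abar \<phi> j) p = (\<i> + of_real (partial uidx \<phi> p)) / (- \<i> + of_real (partial uidx \<phi> p))
      * Lbar \<phi> j (Acoef \<phi> i) p"
proof -
  note d0 = C2_differentiable[OF U(1) C2] and d1 = C2_partial_differentiable[OF U(1) C2]
  note sym = C2_mixed_partials[OF U(1) C2 U(2)]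
  define \<phi>1 where "\<phi>1 k = complex_of_real (partial k \<phi> p)" for k
  define \<phi>2 where "\<phi>2 k m = complex_of_real (partial k (partial m \<phi>) p)" for k m
  define D where "D = \<i> + \<phi>1 uidx"
  define E where "E = - \<i> + \<phi>1 uidx"
  have D: "D \<noteq> 0" and E: "E \<noteq> 0" by (simp_all add: D_def E_def \<phi>1_def complex_eq_iff)
  text \<open>Complex derivatives of \<phi> at p: Zi = \<open>\<phi>_{z_i}\<close>, Zbj = \<open>\<phi>_{zbar_j}\<close>,
    W = \<open>\<phi>_{z_i zbar_j}\<close>, Ziu = \<open>\<phi>_{z_i u}\<close>, Zbju = \<open>\<phi>_{zbar_j u}\<close>, Uuu = \<open>\<phi>_{uu}\<close>.\<close>
  define Zi where "Zi = (\<phi>1 (xidx i) - \<i> * \<phi>1 (yidx i)) / 2"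
  define Zbj where "Zbj = (\<phi>1 (xidx j) + \<i> * \<phi>1 (yidx j)) / 2"
  define W where "W = (\<phi>2 (xidx i) (xidx j) + \<i> * \<phi>2 (xidx i) (yidx j)
      - \<i> * \<phi>2 (yidx i) (xidx j) + \<phi>2 (yidx i) (yidx j)) / 4"
  define Ziu where "Ziu = (\<phi>2 uidx (xidx i) - \<i> * \<phi>2 uidx (yidx i)) / 2"
  define Zbju where "Zbju = (\<phi>2 uidx (xidx j) + \<i> * \<phi>2 uidx (yidx j)) / 2"
  define Uuu where "Uuu = \<phi>2 uidx uidx"
  have dAbar: "partial k (Abar \<phi> j) p = - ((1/2) * (\<phi>2 k (xidx j) + \<i> * \<phi>2 k (yidx j))) / E
     + (1/2) * (\<phi>1 (xidx j) + \<i> * \<phi>1 (yidx j)) * \<phi>2 k uidx / E^2" for k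
    unfolding \<phi>1_def \<phi>2_def E_def
    by (rule partial_of_real_quotient[OF U Abar_real_form]) (use d0 d1 U E in \<open>auto simp: E_def \<phi>1_def\<close>)
  have dAcoef: "partial k (Acoef \<phi> i) p = - ((1/2) * (\<phi>2 k (xidx i) + - \<i> * \<phi>2 k (yidx i))) / D
     + (1/2) * (\<phi>1 (xidx i) + - \<i> * \<phi>1 (yidx i)) * \<phi>2 k uidx / D^2" for k
    unfolding \<phi>1_def \<phi>2_def D_def
    by (rule partial_of_real_quotient[OF U Acoef_real_form]) (use d0 d1 U D in \<open>auto simp: D_def \<phi>1_def\<close>)
  have Abar_p: "Abar \<phi> j p = - Zbj / E" and Acoef_p: "Acoef \<phi> i p = - Zi / D"
    using Abar_real_form[of \<phi> p j] Acoef_real_form[of \<phi> p i] d0 U(2)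
    by (simp_all add: Zbj_def Zi_def E_def D_def \<phi>1_def)
  have sym2: "\<phi>2 k m = \<phi>2 m k" for k m using sym by (simp add: \<phi>2_def)
  have "E * Lop \<phi> i (Abar \<phi> j) p = - W + Zbj * Ziu / E + Zi * Zbju / D - Zi * Zbj * Uuu / (D * E)"
    unfolding Lop_def dz_def du_def dAbar Acoef_p W_def Ziu_def Zbju_def Uuu_def Zi_def Zbj_def
      sym2[of "xidx i" uidx] sym2[of "yidx i" uidx]
    using D E by (simp add: field_simps power2_eq_square)
  also have "\<dots> = D * Lbar \<phi> j (Acoef \<phi> i) p"
    unfolding Lbar_def dzb_def du_def dAcoef Abar_p W_def Ziu_def Zbju_def Uuu_def Zi_def Zbj_def
      sym2[of "xidx j" uidx] sym2[of "yidx j" uidx] sym2[of "xidx j" "xidx i"]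
      sym2[of "yidx j" "yidx i"] sym2[of "yidx j" "xidx i"] sym2[of "xidx j" "yidx i"]
    using D E by (simp add: field_simps power2_eq_square)
  finally show ?thesis using E by (simp add: D_def E_def \<phi>1_def field_simps)
qed

lemma proportional_pairs_quotients:
  fixes a b c d r :: complex
  assumes "a = r * b" "c = r * d" "c \<noteq> 0" "d \<noteq> 0" "c - d \<noteq> 0"
  shows "- (a - b) / (c - d) = - a / c \<and> - a / c = - b / d"
proof -
  have r: "r \<noteq> 0" "r - 1 \<noteq> 0" using assms by (auto simp: algebra_simps)
  have "c - d = (r - 1) * d" "a - b = (r - 1) * b" using assms by (auto simp: algebra_simps)
  then show ?thesis using assms r by (simp add: field_simps)
qed

theorem mainTheorem18:
  fixes \<phi> :: "real^5 \<Rightarrow> real" and U :: "(real^5) set" and \<kappa> :: nat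
  assumes "open U" and "\<kappa> \<ge> 3" and "Ck \<kappa> \<phi> U"
    and "\<forall>p\<in>U. Lop \<phi> 1 (Abar \<phi> 1) p \<noteq> 0"
    and "\<forall>p\<in>U. Lbar \<phi> 1 (Acoef \<phi> 1) p \<noteq> 0"
    and "\<forall>p\<in>U. Lop \<phi> 1 (Abar \<phi> 1) p - Lbar \<phi> 1 (Acoef \<phi> 1) p \<noteq> 0"
  shows "\<forall>p\<in>U.
    - (Lop \<phi> 2 (Abar \<phi> 1) p - Lbar \<phi> 1 (Acoef \<phi> 2) p)
        / (Lop \<phi> 1 (Abar \<phi> 1) p - Lbar \<phi> 1 (Acoef \<phi> 1) p)
      = - Lop \<phi> 2 (Abar \<phi> 1) p / Lop \<phi> 1 (Abar \<phi> 1) p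
    \<and> - Lop \<phi> 2 (Abar \<phi> 1) p / Lop \<phi> 1 (Abar \<phi> 1) p
      = - Lbar \<phi> 1 (Acoef \<phi> 2) p / Lbar \<phi> 1 (Acoef \<phi> 1) p"
proof
  fix p assume p: "p \<in> U"
  have C2: "Ck 2 \<phi> U" using Ck_le[OF assms(3)] assms(2) by simp
  note symmetry = Lop_Abar_eq_Lbar_Acoef[OF assms(1) p C2]
  show "- (Lop \<phi> 2 (Abar \<phi> 1) p - Lbar \<phi> 1 (Acoef \<phi> 2) p)
        / (Lop \<phi> 1 (Abar \<phi> 1) p - Lbar \<phi> 1 (Acoef \<phi> 1) p)
      = - Lop \<phi> 2 (Abar \<phi> 1) p / Lop \<phi> 1 (Abar \<phi> 1) p
    \<and> - Lop \<phi> 2 (Abar \<phi> 1) p / Lop \<phi> 1 (Abar \<phi> 1) p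
      = - Lbar \<phi> 1 (Acoef \<phi> 2) p / Lbar \<phi> 1 (Acoef \<phi> 1) p"
    by (rule proportional_pairs_quotients[OF symmetry symmetry]) (use assms(4-6) p in auto)
qed

end
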